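(* Let $(M^n,g)$ be a Riemannian manifold with Levi-Civita connection which is pseudosymmetric, i.e. there is a scalar function $L_R$ with $$[\nabla_a, \nabla_b] R_{cdef} = L_R\, Q(g,R)_{cdefab},$$ where $$Q(g,R)_{cdefab}= -g_{cb}R_{adef}+g_{ca}R_{bdef}-g_{db}R_{caef}+g_{da}R_{cbef} -g_{eb}R_{cdaf}+g_{ea}R_{cdbf}-g_{fb}R_{cdea}+g_{fa}R_{cdeb}.$$ Then $$R_{am}R_{bce}{}^m + R_{bm}R_{cae}{}^m+ R_{cm}R_{abe}{}^m =0\quad\text{and}\quad R_{am} R_{bec}{}^m - R_{bm}R_{ace}{}^m + R_{cm} R_{eba}{}^m -R_{em} R_{cab}{}^m =0 .$$
   Context: Abstract index notation with Einstein summation; indices lowered with $g$, $R_{abcd}=R_{abc}{}^eg_{ed}$. $R_{abc}{}^d = \partial_a \Gamma_{bc}^d - \partial_b\Gamma_{ac}^d - \Gamma_{ac}^k\Gamma_{bk}^d + \Gamma_{ak}^d \Gamma_{bc}^k$, $R_{ac}=R_{abc}{}^b$, $[\nabla_a,\nabla_b]=\nabla_a\nabla_b-\nabla_b\nabla_a$. *)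

theory Defs
  imports "HOL-Analysis.Analysis"
begin

text \<open>Local-coordinate setting: a chart domain U (open subset of R^n, with index
type 'n), metric components g x i j.\<close>

definition pd :: "'n::finite \<Rightarrow> (real^'n \<Rightarrow> real) \<Rightarrow> real^'n \<Rightarrow> real" where
  "pd a f x = deriv (\<lambda>t. f (x + t *\<^sub>R axis a 1)) 0"

fun ipd :: "'n::finite list \<Rightarrow> (real^'n \<Rightarrow> real) \<Rightarrow> real^'n \<Rightarrow> real" where
  "ipd [] f = f"
| "ipd (a # as) f = pd a (ipd as f)"

definition smooth_on :: "(real^'n::finite) set \<Rightarrow> (real^'n \<Rightarrow> real) \<Rightarrow> bool" where
  "smooth_on U f \<longleftrightarrow> (\<forall>as. \<forall>x\<in>U. ipd as f differentiable (at x))"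

definition riemannian_metric_on ::
  "(real^'n::finite) set \<Rightarrow> (real^'n \<Rightarrow> 'n \<Rightarrow> 'n \<Rightarrow> real) \<Rightarrow> bool" where
  "riemannian_metric_on U g \<longleftrightarrow> open U \<and>
     (\<forall>i j. smooth_on U (\<lambda>x. g x i j)) \<and>
     (\<forall>x\<in>U. \<forall>i j. g x i j = g x j i) \<and>
     (\<forall>x\<in>U. \<forall>v::real^'n. v \<noteq> 0 \<longrightarrow> (\<Sum>i\<in>UNIV. \<Sum>j\<in>UNIV. g x i j * v$i * v$j) > 0)"

definition ginv :: "(real^'n::finite \<Rightarrow> 'n \<Rightarrow> 'n \<Rightarrow> real) \<Rightarrow> real^'n \<Rightarrow> 'n \<Rightarrow> 'n \<Rightarrow> real" where
  "ginv g x i j = matrix_inv (\<chi> k l. g x k l) $ i $ j"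

definition Gamma :: "(real^'n::finite \<Rightarrow> 'n \<Rightarrow> 'n \<Rightarrow> real) \<Rightarrow> real^'n \<Rightarrow> 'n \<Rightarrow> 'n \<Rightarrow> 'n \<Rightarrow> real" where
  "Gamma g x a b c = (1/2) * (\<Sum>d\<in>UNIV. ginv g x c d *
      (pd a (\<lambda>y. g y b d) x + pd b (\<lambda>y. g y a d) x - pd d (\<lambda>y. g y a b) x))"

definition Rup :: "(real^'n::finite \<Rightarrow> 'n \<Rightarrow> 'n \<Rightarrow> real) \<Rightarrow> real^'n \<Rightarrow> 'n \<Rightarrow> 'n \<Rightarrow> 'n \<Rightarrow> 'n \<Rightarrow> real" where
  "Rup g x a b c d = pd a (\<lambda>y. Gamma g y b c d) x - pd b (\<lambda>y. Gamma g y a c d) x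
     - (\<Sum>k\<in>UNIV. Gamma g x a c k * Gamma g x b k d) + (\<Sum>k\<in>UNIV. Gamma g x a k d * Gamma g x b c k)"

definition Rlow :: "(real^'n::finite \<Rightarrow> 'n \<Rightarrow> 'n \<Rightarrow> real) \<Rightarrow> real^'n \<Rightarrow> 'n \<Rightarrow> 'n \<Rightarrow> 'n \<Rightarrow> 'n \<Rightarrow> real" where
  "Rlow g x a b c d = (\<Sum>e\<in>UNIV. Rup g x a b c e * g x e d)"

definition Ric :: "(real^'n::finite \<Rightarrow> 'n \<Rightarrow> 'n \<Rightarrow> real) \<Rightarrow> real^'n \<Rightarrow> 'n \<Rightarrow> 'n \<Rightarrow> real" where
  "Ric g x a c = (\<Sum>b\<in>UNIV. Rup g x a b c b)"

text \<open>Covariant tensor fields of arbitrary rank, indexed by lists of indices.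
 (nabla T)_{a i1 ... ik} = d_a T_{i1...ik} - sum_j Gamma_{a ij}^k T_{i1..k..ik}\<close>
definition nabla :: "(real^'n::finite \<Rightarrow> 'n \<Rightarrow> 'n \<Rightarrow> real) \<Rightarrow> (real^'n \<Rightarrow> 'n list \<Rightarrow> real)
     \<Rightarrow> real^'n \<Rightarrow> 'n list \<Rightarrow> real" where
  "nabla g T x ids = (case ids of [] \<Rightarrow> 0
     | a # is \<Rightarrow> pd a (\<lambda>y. T y is) x
        - (\<Sum>j<length is. \<Sum>k\<in>UNIV. Gamma g x a (is ! j) k * T x (is[j := k])))"

definition Rtensor :: "(real^'n::finite \<Rightarrow> 'n \<Rightarrow> 'n \<Rightarrow> real) \<Rightarrow> real^'n \<Rightarrow> 'n list \<Rightarrow> real" where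
  "Rtensor g x is = Rlow g x (is!0) (is!1) (is!2) (is!3)"

definition QgR :: "(real^'n::finite \<Rightarrow> 'n \<Rightarrow> 'n \<Rightarrow> real) \<Rightarrow> real^'n \<Rightarrow> 'n \<Rightarrow> 'n \<Rightarrow> 'n \<Rightarrow> 'n \<Rightarrow> 'n \<Rightarrow> 'n \<Rightarrow> real" where
  "QgR g x c d e f a b =
     - g x c b * Rlow g x a d e f + g x c a * Rlow g x b d e f
     - g x d b * Rlow g x c a e f + g x d a * Rlow g x c b e f
     - g x e b * Rlow g x c d a f + g x e a * Rlow g x c d b f
     - g x f b * Rlow g x c d e a + g x f a * Rlow g x c d e b"

definition pseudosymmetric_on :: "(real^'n::finite) set \<Rightarrow> (real^'n \<Rightarrow> 'n \<Rightarrow> 'n \<Rightarrow> real) \<Rightarrow> bool" where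
  "pseudosymmetric_on U g \<longleftrightarrow> (\<exists>L :: real^'n \<Rightarrow> real. \<forall>x\<in>U. \<forall>a b c d e f.
     nabla g (nabla g (Rtensor g)) x [a,b,c,d,e,f] - nabla g (nabla g (Rtensor g)) x [b,a,c,d,e,f]
       = L x * QgR g x c d e f a b)"

end

theory Submission
  imports Defs
begin

text \<open>
  By the Ricci identity, [\<nabla>_a, \<nabla>_b] R_{cdef} is minus the curvature operator R_{ab} acting on
  R as a derivation, so pseudosymmetry is a pointwise algebraic relation between R and g.
  Contracting it with g^{cf}, the terms in which R_{ab} acts on c and on f cancel because
  R_{ab}{}^{cf} is antisymmetric in c and f, the two middle terms become Ricci tensors, and
  Q(g,R) contracts to an expression in g and Ric:
  R_{abd}{}^m R_{me} + R_{abe}{}^m R_{dm} = L_R (g_{db} R_{ae} - g_{da} R_{be} + g_{eb} R_{da} - g_{ea} R_{db}).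
  Adding suitable permutations of this relation, the right-hand sides cancel by the symmetry of g
  and Ric, while the left-hand sides combine, via the first Bianchi identity, into the two claimed
  identities.

  The analytic input is the symmetry of mixed partial derivatives, which yields the Ricci identity
  for covariant derivatives of smooth tensor fields; applied to the parallel metric it also gives
  the antisymmetry of R_{abcd} in its last two indices.
\<close>

section \<open>Partial derivatives\<close>

lemma has_real_derivative_along_line:
  fixes f :: "'a::real_normed_vector \<Rightarrow> real"
  assumes "(f has_derivative D) (at (z + s0 *\<^sub>R v))"
  shows "((\<lambda>s. f (z + s *\<^sub>R v)) has_real_derivative D v) (at s0)"
proof -
  have "((\<lambda>s. z + s *\<^sub>R v) has_derivative (\<lambda>s. s *\<^sub>R v)) (at s0)"
    by (auto intro!: derivative_eq_intros)
  from has_derivative_compose[OF this assms]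
  have "((\<lambda>s. f (z + s *\<^sub>R v)) has_derivative (\<lambda>s. D (s *\<^sub>R v))) (at s0)"
    by (simp add: o_def)
  moreover have "(\<lambda>s. D (s *\<^sub>R v)) = (\<lambda>s. D v * s)"
    using has_derivative_linear[OF assms] by (auto simp: linear_scale)
  ultimately show ?thesis
    unfolding has_field_derivative_def by simp
qed

lemma pd_has_derivative:
  fixes f :: "real^'n::finite \<Rightarrow> real"
  assumes "(f has_derivative D) (at y)"
  shows "pd a f y = D (axis a 1)"
proof -
  have "((\<lambda>s. f (y + s *\<^sub>R axis a 1)) has_real_derivative D (axis a 1)) (at 0)"
    by (rule has_real_derivative_along_line) (use assms in simp)
  then show ?thesis
    unfolding pd_def by (rule DERIV_imp_deriv)
qed

lemma pd_cong_open:
  fixes f :: "real^'n::finite \<Rightarrow> real"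
  assumes "open U" "x \<in> U" "\<And>y. y \<in> U \<Longrightarrow> f y = h y"
  shows "pd a f x = pd a h x"
proof -
  obtain e where e: "e > 0" "ball x e \<subseteq> U"
    using assms(1,2) open_contains_ball by blast
  have "\<forall>\<^sub>F t in nhds 0. f (x + t *\<^sub>R axis a 1) = h (x + t *\<^sub>R axis a 1)"
    unfolding eventually_nhds_metric
  proof (intro exI conjI allI impI)
    fix t :: real
    assume "dist t 0 < e"
    then have "x + t *\<^sub>R axis a 1 \<in> ball x e"
      by (simp add: dist_norm)
    then show "f (x + t *\<^sub>R axis a 1) = h (x + t *\<^sub>R axis a 1)"
      using e assms(3) by blast
  qed (fact e)
  then show ?thesis
    unfolding pd_def by (intro deriv_cong_ev) auto
qed

lemma pd_const: "pd a (\<lambda>y. c :: real) (y :: real^'n::finite) = 0"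
  by (rule pd_has_derivative) (rule has_derivative_const)

lemma pd_add:
  fixes f h :: "real^'n::finite \<Rightarrow> real"
  assumes "f differentiable (at y)" "h differentiable (at y)"
  shows "pd a (\<lambda>y. f y + h y) y = pd a f y + pd a h y"
proof -
  obtain Df Dh where D: "(f has_derivative Df) (at y)" "(h has_derivative Dh) (at y)"
    using assms unfolding differentiable_def by blast
  then have "((\<lambda>y. f y + h y) has_derivative (\<lambda>v. Df v + Dh v)) (at y)"
    by (rule has_derivative_add)
  from pd_has_derivative[OF this] show ?thesis
    using pd_has_derivative[OF D(1), of a] pd_has_derivative[OF D(2), of a] by simp
qed

lemma pd_diff:
  fixes f h :: "real^'n::finite \<Rightarrow> real"
  assumes "f differentiable (at y)" "h differentiable (at y)"
  shows "pd a (\<lambda>y. f y - h y) y = pd a f y - pd a h y"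
proof -
  obtain Df Dh where D: "(f has_derivative Df) (at y)" "(h has_derivative Dh) (at y)"
    using assms unfolding differentiable_def by blast
  then have "((\<lambda>y. f y - h y) has_derivative (\<lambda>v. Df v - Dh v)) (at y)"
    by (rule has_derivative_diff)
  from pd_has_derivative[OF this] show ?thesis
    using pd_has_derivative[OF D(1), of a] pd_has_derivative[OF D(2), of a] by simp
qed

lemma pd_mult:
  fixes f h :: "real^'n::finite \<Rightarrow> real"
  assumes "f differentiable (at y)" "h differentiable (at y)"
  shows "pd a (\<lambda>y. f y * h y) y = pd a f y * h y + f y * pd a h y"
proof -
  obtain Df Dh where D: "(f has_derivative Df) (at y)" "(h has_derivative Dh) (at y)"
    using assms unfolding differentiable_def by blast
  then have "((\<lambda>y. f y * h y) has_derivative (\<lambda>v. f y * Dh v + Df v * h y)) (at y)"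
    by (rule has_derivative_mult)
  from pd_has_derivative[OF this] show ?thesis
    using pd_has_derivative[OF D(1), of a] pd_has_derivative[OF D(2), of a] by (simp add: add.commute)
qed

lemma pd_minus:
  fixes f :: "real^'n::finite \<Rightarrow> real"
  assumes "f differentiable (at y)"
  shows "pd a (\<lambda>y. - f y) y = - pd a f y"
proof -
  obtain Df where D: "(f has_derivative Df) (at y)"
    using assms unfolding differentiable_def by blast
  then have "((\<lambda>y. - f y) has_derivative (\<lambda>v. - Df v)) (at y)"
    by (rule has_derivative_minus)
  from pd_has_derivative[OF this] show ?thesis
    using pd_has_derivative[OF D, of a] by simp
qed

lemma pd_inverse:
  fixes f :: "real^'n::finite \<Rightarrow> real"
  assumes "f differentiable (at y)" "f y \<noteq> 0"
  shows "pd a (\<lambda>y. inverse (f y)) y = - (inverse (f y) * pd a f y * inverse (f y))"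
proof -
  obtain Df where D: "(f has_derivative Df) (at y)"
    using assms unfolding differentiable_def by blast
  with assms(2) have "((\<lambda>y. inverse (f y)) has_derivative (\<lambda>v. - (inverse (f y) * Df v * inverse (f y)))) (at y)"
    by (rule Deriv.has_derivative_inverse)
  from pd_has_derivative[OF this] show ?thesis
    using pd_has_derivative[OF D, of a] by simp
qed

lemma pd_sum:
  fixes f :: "'i \<Rightarrow> real^'n::finite \<Rightarrow> real"
  assumes "finite S" "\<And>i. i \<in> S \<Longrightarrow> f i differentiable (at y)"
  shows "pd a (\<lambda>y. \<Sum>i\<in>S. f i y) y = (\<Sum>i\<in>S. pd a (f i) y)"
  using assms
proof (induction S rule: finite_induct)
  case empty
  then show ?case by (simp add: pd_const)
next
  case (insert i S)
  have "(\<lambda>y. \<Sum>i\<in>S. f i y) differentiable (at y)"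
    using insert by (intro differentiable_sum) auto
  then have "pd a (\<lambda>y. f i y + (\<Sum>i\<in>S. f i y)) y = pd a (f i) y + pd a (\<lambda>y. \<Sum>i\<in>S. f i y) y"
    using insert by (intro pd_add) auto
  then show ?case
    using insert by simp
qed

lemma ipd_append_single: "ipd (as @ [a]) f = ipd as (pd a f)"
  by (induction as) auto

lemma ipd_cong_open:
  fixes f :: "real^'n::finite \<Rightarrow> real"
  assumes "open U" "\<And>y. y \<in> U \<Longrightarrow> f y = h y" "y \<in> U"
  shows "ipd as f y = ipd as h y"
  using assms(3)
proof (induction as arbitrary: y)
  case Nil
  then show ?case using assms by simp
next
  case (Cons a as)
  show ?case
    using pd_cong_open[OF assms(1) Cons.prems Cons.IH] by simp
qed

text \<open>Finite-order smoothness serves as the induction parameter for the closure properties of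
  \<open>smooth_on\<close>.\<close>

definition smooth_upto_on :: "(real^'n::finite) set \<Rightarrow> nat \<Rightarrow> (real^'n \<Rightarrow> real) \<Rightarrow> bool" where
  "smooth_upto_on U n f \<longleftrightarrow> (\<forall>as. length as \<le> n \<longrightarrow> (\<forall>x\<in>U. ipd as f differentiable (at x)))"

lemma smooth_on_iff_smooth_upto_on: "smooth_on U f \<longleftrightarrow> (\<forall>n. smooth_upto_on U n f)"
  unfolding smooth_on_def smooth_upto_on_def by auto

lemma smooth_upto_on_0: "smooth_upto_on U 0 f \<longleftrightarrow> (\<forall>x\<in>U. f differentiable (at x))"
  unfolding smooth_upto_on_def by simp

lemma smooth_upto_on_mono: "smooth_upto_on U n f \<Longrightarrow> m \<le> n \<Longrightarrow> smooth_upto_on U m f"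
  unfolding smooth_upto_on_def by auto

lemma smooth_upto_on_Suc:
  "smooth_upto_on U (Suc n) f \<longleftrightarrow> smooth_upto_on U 0 f \<and> (\<forall>a. smooth_upto_on U n (pd a f))"
proof
  assume f: "smooth_upto_on U (Suc n) f"
  have "smooth_upto_on U n (pd a f)" for a
    unfolding smooth_upto_on_def
  proof (intro allI impI ballI)
    fix as :: "'a list" and x
    assume "length as \<le> n" "x \<in> U"
    then have "ipd (as @ [a]) f differentiable (at x)"
      using f unfolding smooth_upto_on_def by simp
    then show "ipd as (pd a f) differentiable (at x)"
      by (simp add: ipd_append_single)
  qed
  then show "smooth_upto_on U 0 f \<and> (\<forall>a. smooth_upto_on U n (pd a f))"
    using f smooth_upto_on_mono by blast
next
  assume f: "smooth_upto_on U 0 f \<and> (\<forall>a. smooth_upto_on U n (pd a f))"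
  show "smooth_upto_on U (Suc n) f"
    unfolding smooth_upto_on_def
  proof (intro allI impI ballI)
    fix as :: "'a list" and x
    assume "length as \<le> Suc n" "x \<in> U"
    then show "ipd as f differentiable (at x)"
      using f by (cases as rule: rev_exhaust)
        (auto simp: smooth_upto_on_0 smooth_upto_on_def ipd_append_single)
  qed
qed

lemma smooth_upto_on_cong:
  assumes "open U" "\<And>y. y \<in> U \<Longrightarrow> f y = h y" "smooth_upto_on U n f"
  shows "smooth_upto_on U n h"
  unfolding smooth_upto_on_def
proof (intro allI impI ballI)
  fix as :: "'a list" and x
  assume "length as \<le> n" "x \<in> U"
  then obtain D where "(ipd as f has_derivative D) (at x)"
    using assms(3) unfolding smooth_upto_on_def differentiable_def by blast
  then have "(ipd as h has_derivative D) (at x)"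
    using ipd_cong_open[OF assms(1,2)] \<open>x \<in> U\<close> assms(1)
    by (auto intro: has_derivative_transform_within_open)
  then show "ipd as h differentiable (at x)"
    unfolding differentiable_def by blast
qed

lemma smooth_upto_on_const:
  fixes U :: "(real^'n::finite) set"
  shows "smooth_upto_on U n (\<lambda>y. c)"
proof (induction n arbitrary: c)
  case 0
  then show ?case by (simp add: smooth_upto_on_0)
next
  case (Suc n)
  have "pd a (\<lambda>y::real^'n. c) = (\<lambda>y. 0)" for a
    by (simp add: pd_const fun_eq_iff)
  then show ?case
    using Suc.IH[of 0] by (simp add: smooth_upto_on_Suc smooth_upto_on_0)
qed

lemma smooth_upto_on_SucI:
  assumes "open U" "\<And>x. x \<in> U \<Longrightarrow> f differentiable (at x)"
    and "\<And>a. smooth_upto_on U n (h a)" "\<And>a y. y \<in> U \<Longrightarrow> pd a f y = h a y"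
  shows "smooth_upto_on U (Suc n) f"
  unfolding smooth_upto_on_Suc smooth_upto_on_0
  using assms smooth_upto_on_cong[OF assms(1)] by metis

lemma smooth_upto_on_differentiable: "smooth_upto_on U n f \<Longrightarrow> x \<in> U \<Longrightarrow> f differentiable (at x)"
  using smooth_upto_on_0 smooth_upto_on_mono by blast

lemma smooth_upto_on_add:
  assumes "open U"
  shows "smooth_upto_on U n f \<Longrightarrow> smooth_upto_on U n h \<Longrightarrow> smooth_upto_on U n (\<lambda>y. f y + h y)"
proof (induction n arbitrary: f h)
  case 0
  then show ?case by (simp add: smooth_upto_on_0 differentiable_add)
next
  case (Suc n)
  show ?case
  proof (rule smooth_upto_on_SucI[OF assms])
    show "(\<lambda>y. f y + h y) differentiable (at x)" if "x \<in> U" for x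
      using Suc.prems that by (intro differentiable_add smooth_upto_on_differentiable)
    show "smooth_upto_on U n (\<lambda>y. pd a f y + pd a h y)" for a
      using Suc.prems by (intro Suc.IH) (auto simp: smooth_upto_on_Suc)
    show "pd a (\<lambda>y. f y + h y) y = pd a f y + pd a h y" if "y \<in> U" for a y
      using Suc.prems that by (intro pd_add smooth_upto_on_differentiable)
  qed
qed

lemma smooth_upto_on_minus:
  assumes "open U"
  shows "smooth_upto_on U n f \<Longrightarrow> smooth_upto_on U n (\<lambda>y. - f y)"
proof (induction n arbitrary: f)
  case 0
  then show ?case by (simp add: smooth_upto_on_0 differentiable_minus)
next
  case (Suc n)
  show ?case
  proof (rule smooth_upto_on_SucI[OF assms])
    show "(\<lambda>y. - f y) differentiable (at x)" if "x \<in> U" for x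
      using Suc.prems that by (intro differentiable_minus smooth_upto_on_differentiable)
    show "smooth_upto_on U n (\<lambda>y. - pd a f y)" for a
      using Suc.prems by (intro Suc.IH) (auto simp: smooth_upto_on_Suc)
    show "pd a (\<lambda>y. - f y) y = - pd a f y" if "y \<in> U" for a y
      using Suc.prems that by (intro pd_minus smooth_upto_on_differentiable)
  qed
qed

lemma smooth_upto_on_mult:
  assumes "open U"
  shows "smooth_upto_on U n f \<Longrightarrow> smooth_upto_on U n h \<Longrightarrow> smooth_upto_on U n (\<lambda>y. f y * h y)"
proof (induction n arbitrary: f h)
  case 0
  then show ?case by (simp add: smooth_upto_on_0 differentiable_mult)
next
  case (Suc n)
  have fh: "smooth_upto_on U n f" "smooth_upto_on U n h" "smooth_upto_on U n (pd a f)" "smooth_upto_on U n (pd a h)" for a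
    using Suc.prems smooth_upto_on_mono[of U "Suc n" _ n] by (auto simp: smooth_upto_on_Suc)
  show ?case
  proof (rule smooth_upto_on_SucI[OF assms])
    show "(\<lambda>y. f y * h y) differentiable (at x)" if "x \<in> U" for x
      using Suc.prems that by (intro differentiable_mult smooth_upto_on_differentiable)
    show "smooth_upto_on U n (\<lambda>y. pd a f y * h y + f y * pd a h y)" for a
      using fh by (intro smooth_upto_on_add[OF assms] Suc.IH)
    show "pd a (\<lambda>y. f y * h y) y = pd a f y * h y + f y * pd a h y" if "y \<in> U" for a y
      using Suc.prems that by (intro pd_mult smooth_upto_on_differentiable)
  qed
qed

lemma smooth_upto_on_inverse:
  assumes "open U" "\<And>y. y \<in> U \<Longrightarrow> f y \<noteq> 0"
  shows "smooth_upto_on U n f \<Longrightarrow> smooth_upto_on U n (\<lambda>y. inverse (f y))"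
proof (induction n)
  case 0
  then show ?case
    using assms(2) by (auto simp: smooth_upto_on_0 intro: differentiable_inverse)
next
  case (Suc n)
  have f: "smooth_upto_on U n f" "smooth_upto_on U n (pd a f)" for a
    using Suc.prems smooth_upto_on_mono[of U "Suc n" _ n] by (auto simp: smooth_upto_on_Suc)
  show ?case
  proof (rule smooth_upto_on_SucI[OF assms(1)])
    show "(\<lambda>y. inverse (f y)) differentiable (at x)" if "x \<in> U" for x
      using Suc.prems that assms(2) by (intro differentiable_inverse smooth_upto_on_differentiable)
    show "smooth_upto_on U n (\<lambda>y. - (inverse (f y) * pd a f y * inverse (f y)))" for a
      using f Suc.IH by (intro smooth_upto_on_minus smooth_upto_on_mult assms(1))
    show "pd a (\<lambda>y. inverse (f y)) y = - (inverse (f y) * pd a f y * inverse (f y))" if "y \<in> U" for a y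
      using Suc.prems that assms(2) by (intro pd_inverse smooth_upto_on_differentiable)
  qed
qed

lemma smooth_on_const: "smooth_on U (\<lambda>y. c)"
  unfolding smooth_on_iff_smooth_upto_on by (simp add: smooth_upto_on_const)

lemma smooth_on_add: "open U \<Longrightarrow> smooth_on U f \<Longrightarrow> smooth_on U h \<Longrightarrow> smooth_on U (\<lambda>y. f y + h y)"
  unfolding smooth_on_iff_smooth_upto_on by (simp add: smooth_upto_on_add)

lemma smooth_on_minus: "open U \<Longrightarrow> smooth_on U f \<Longrightarrow> smooth_on U (\<lambda>y. - f y)"
  unfolding smooth_on_iff_smooth_upto_on by (simp add: smooth_upto_on_minus)

lemma smooth_on_diff: "open U \<Longrightarrow> smooth_on U f \<Longrightarrow> smooth_on U h \<Longrightarrow> smooth_on U (\<lambda>y. f y - h y)"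
  using smooth_on_add[of U f "\<lambda>y. - h y"] smooth_on_minus[of U h] by simp

lemma smooth_on_mult: "open U \<Longrightarrow> smooth_on U f \<Longrightarrow> smooth_on U h \<Longrightarrow> smooth_on U (\<lambda>y. f y * h y)"
  unfolding smooth_on_iff_smooth_upto_on by (simp add: smooth_upto_on_mult)

lemma smooth_on_inverse:
  "open U \<Longrightarrow> (\<And>y. y \<in> U \<Longrightarrow> f y \<noteq> 0) \<Longrightarrow> smooth_on U f \<Longrightarrow> smooth_on U (\<lambda>y. inverse (f y))"
  unfolding smooth_on_iff_smooth_upto_on by (simp add: smooth_upto_on_inverse)

lemma smooth_on_sum:
  assumes "open U" "finite S" "\<And>i. i \<in> S \<Longrightarrow> smooth_on U (f i)"
  shows "smooth_on U (\<lambda>y. \<Sum>i\<in>S. f i y)"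
  using assms(2,3) by (induction S rule: finite_induct) (simp_all add: smooth_on_const smooth_on_add assms(1))

lemma smooth_on_prod:
  assumes "open U" "finite S" "\<And>i. i \<in> S \<Longrightarrow> smooth_on U (f i)"
  shows "smooth_on U (\<lambda>y. \<Prod>i\<in>S. f i y)"
  using assms(2,3) by (induction S rule: finite_induct) (simp_all add: smooth_on_const smooth_on_mult assms(1))

lemma smooth_on_if: "smooth_on U f \<Longrightarrow> smooth_on U h \<Longrightarrow> smooth_on U (\<lambda>y. if P then f y else h y)"
  by (cases P) auto

lemma smooth_on_pd: "smooth_on U f \<Longrightarrow> smooth_on U (pd a f)"
  unfolding smooth_on_iff_smooth_upto_on using smooth_upto_on_Suc by blast

lemma smooth_on_differentiable: "smooth_on U f \<Longrightarrow> x \<in> U \<Longrightarrow> f differentiable (at x)"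
  unfolding smooth_on_iff_smooth_upto_on using smooth_upto_on_differentiable by blast

lemma smooth_on_cong: "open U \<Longrightarrow> (\<And>y. y \<in> U \<Longrightarrow> f y = h y) \<Longrightarrow> smooth_on U f \<Longrightarrow> smooth_on U h"
  unfolding smooth_on_iff_smooth_upto_on using smooth_upto_on_cong by blast

section \<open>Symmetry of mixed partial derivatives\<close>

definition second_difference :: "(real^'n::finite \<Rightarrow> real) \<Rightarrow> real^'n \<Rightarrow> real^'n \<Rightarrow> real^'n \<Rightarrow> real" where
  "second_difference f x u w = f (x + u + w) - f (x + u) - f (x + w) + f x"

lemma second_difference_commute: "second_difference f x u w = second_difference f x w u"
  unfolding second_difference_def by (simp add: add_ac)

lemma second_difference_mean_value:
  fixes f :: "real^'n::finite \<Rightarrow> real"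
  assumes h: "0 < h"
    and fd: "\<And>s. 0 \<le> s \<Longrightarrow> s \<le> h \<Longrightarrow>
      f differentiable (at (x + v + s *\<^sub>R axis a 1)) \<and> f differentiable (at (x + s *\<^sub>R axis a 1))"
  shows "\<exists>\<xi>. 0 < \<xi> \<and> \<xi> < h \<and> second_difference f x v (h *\<^sub>R axis a 1) =
    h * (pd a f (x + v + \<xi> *\<^sub>R axis a 1) - pd a f (x + \<xi> *\<^sub>R axis a 1))"
proof -
  define \<phi> where "\<phi> s = f (x + v + s *\<^sub>R axis a 1) - f (x + s *\<^sub>R axis a 1)" for s
  have der: "(\<phi> has_real_derivative pd a f (x + v + s *\<^sub>R axis a 1) - pd a f (x + s *\<^sub>R axis a 1)) (at s)"
    if s: "0 \<le> s" "s \<le> h" for s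
  proof -
    obtain D1 D2 where D: "(f has_derivative D1) (at (x + v + s *\<^sub>R axis a 1))"
        "(f has_derivative D2) (at (x + s *\<^sub>R axis a 1))"
      using fd[OF s] unfolding differentiable_def by blast
    have "(\<phi> has_real_derivative D1 (axis a 1) - D2 (axis a 1)) (at s)"
      unfolding \<phi>_def using D by (intro DERIV_diff has_real_derivative_along_line)
    then show ?thesis
      using pd_has_derivative[OF D(1)] pd_has_derivative[OF D(2)] by simp
  qed
  obtain \<xi> where "0 < \<xi>" "\<xi> < h"
    "\<phi> h - \<phi> 0 = (h - 0) * (pd a f (x + v + \<xi> *\<^sub>R axis a 1) - pd a f (x + \<xi> *\<^sub>R axis a 1))"
    using MVT2[OF h der] by auto
  moreover have "second_difference f x v (h *\<^sub>R axis a 1) = \<phi> h - \<phi> 0"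
    unfolding second_difference_def \<phi>_def by simp
  ultimately show ?thesis by auto
qed

lemma has_derivative_two_point_bound:
  fixes \<phi> :: "'a::real_normed_vector \<Rightarrow> real"
  assumes "(\<phi> has_derivative D) (at x)" "\<epsilon> > 0"
  shows "\<exists>d>0. \<forall>u v. norm u < d \<longrightarrow> norm v < d \<longrightarrow>
    \<bar>\<phi> (x + u) - \<phi> (x + v) - D (u - v)\<bar> \<le> \<epsilon> * (norm u + norm v)"
proof -
  obtain d where "d > 0" and d: "\<And>y. norm (y - x) < d \<Longrightarrow> \<bar>\<phi> y - \<phi> x - D (y - x)\<bar> \<le> \<epsilon> * norm (y - x)"
    using assms unfolding has_derivative_at_alt by (auto simp: real_norm_def)
  have "linear D"
    using assms(1) has_derivative_linear by blast
  then have "\<bar>\<phi> (x + u) - \<phi> (x + v) - D (u - v)\<bar> \<le> \<epsilon> * (norm u + norm v)"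
    if "norm u < d" "norm v < d" for u v
    using d[of "x + u"] d[of "x + v"] that by (simp add: linear_diff abs_le_iff distrib_left)
  with \<open>d > 0\<close> show ?thesis
    by blast
qed

lemma second_difference_approx:
  fixes f :: "real^'n::finite \<Rightarrow> real"
  assumes "open U" "x \<in> U" and fd: "\<And>y. y \<in> U \<Longrightarrow> f differentiable (at y)"
    and Da: "(pd a f has_derivative Da) (at x)" and "\<epsilon> > 0"
  shows "\<exists>d>0. \<forall>h. 0 < h \<and> h < d \<longrightarrow>
    \<bar>second_difference f x (h *\<^sub>R axis b 1) (h *\<^sub>R axis a 1) - h\<^sup>2 * Da (axis b 1)\<bar> \<le> 3 * \<epsilon> * h\<^sup>2"
proof -
  obtain d1 where "d1 > 0" and d1: "\<And>u v. norm u < d1 \<Longrightarrow> norm v < d1 \<Longrightarrow>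
      \<bar>pd a f (x + u) - pd a f (x + v) - Da (u - v)\<bar> \<le> \<epsilon> * (norm u + norm v)"
    using has_derivative_two_point_bound[OF Da \<open>\<epsilon> > 0\<close>] by blast
  obtain d2 where "d2 > 0" "ball x d2 \<subseteq> U"
    using assms(1,2) open_contains_ball by blast
  then have inU: "x + w \<in> U" if "norm w < d2" for w
    using that dist_norm[of x "x + w"] by auto
  show ?thesis
  proof (intro exI[of _ "min d1 d2 / 2"] conjI allI impI)
    show "min d1 d2 / 2 > 0" using \<open>d1 > 0\<close> \<open>d2 > 0\<close> by simp
    fix h :: real
    assume h: "0 < h \<and> h < min d1 d2 / 2"
    define ea eb :: "real^'n" where "ea = axis a 1" and "eb = axis b 1"
    have near: "norm (h *\<^sub>R eb + s *\<^sub>R ea) \<le> 2 * h" "norm (s *\<^sub>R ea) \<le> h"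
      if "0 \<le> s" "s \<le> h" for s
      using that h norm_triangle_ineq[of "h *\<^sub>R eb" "s *\<^sub>R ea"] by (auto simp: ea_def eb_def)
    have "x + h *\<^sub>R eb + s *\<^sub>R ea \<in> U \<and> x + s *\<^sub>R ea \<in> U" if "0 \<le> s" "s \<le> h" for s
      using near[OF that] h inU[of "h *\<^sub>R eb + s *\<^sub>R ea"] inU[of "s *\<^sub>R ea"] by (simp add: add.assoc)
    then obtain \<xi> where \<xi>: "0 < \<xi>" "\<xi> < h" and sd:
      "second_difference f x (h *\<^sub>R eb) (h *\<^sub>R ea) = h * (pd a f (x + (h *\<^sub>R eb + \<xi> *\<^sub>R ea)) - pd a f (x + \<xi> *\<^sub>R ea))"
      using second_difference_mean_value[of h f x "h *\<^sub>R eb" a] h fd by (auto simp: ea_def add.assoc)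
    have "\<bar>pd a f (x + (h *\<^sub>R eb + \<xi> *\<^sub>R ea)) - pd a f (x + \<xi> *\<^sub>R ea) - h * Da eb\<bar> \<le> \<epsilon> * (2 * h + h)"
      using d1[of "h *\<^sub>R eb + \<xi> *\<^sub>R ea" "\<xi> *\<^sub>R ea"] near[of \<xi>] \<xi> h \<open>\<epsilon> > 0\<close>
        has_derivative_linear[OF Da]
      by (force simp: linear_scale intro: order_trans[OF _ mult_left_mono])
    then have "h * \<bar>pd a f (x + (h *\<^sub>R eb + \<xi> *\<^sub>R ea)) - pd a f (x + \<xi> *\<^sub>R ea) - h * Da eb\<bar> \<le> h * (3 * \<epsilon> * h)"
      using h by (intro mult_left_mono) auto
    moreover have "second_difference f x (h *\<^sub>R eb) (h *\<^sub>R ea) - h\<^sup>2 * Da eb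
        = h * (pd a f (x + (h *\<^sub>R eb + \<xi> *\<^sub>R ea)) - pd a f (x + \<xi> *\<^sub>R ea) - h * Da eb)"
      unfolding sd by (simp add: power2_eq_square algebra_simps)
    ultimately show "\<bar>second_difference f x (h *\<^sub>R axis b 1) (h *\<^sub>R axis a 1) - h\<^sup>2 * Da (axis b 1)\<bar> \<le> 3 * \<epsilon> * h\<^sup>2"
      using h by (simp add: ea_def eb_def abs_mult power2_eq_square mult_ac)
  qed
qed

text \<open>Both mixed partials are limits of the same symmetric second difference divided by h^2.\<close>

lemma pd_commute:
  fixes f :: "real^'n::finite \<Rightarrow> real"
  assumes "open U" "x \<in> U" and f: "smooth_on U f"
  shows "pd b (pd a f) x = pd a (pd b f) x"
proof (rule ccontr)
  assume ne: "pd b (pd a f) x \<noteq> pd a (pd b f) x"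
  have fd: "\<And>y. y \<in> U \<Longrightarrow> f differentiable (at y)"
    using f smooth_on_differentiable by blast
  obtain Da Db where Da: "(pd a f has_derivative Da) (at x)" and Db: "(pd b f has_derivative Db) (at x)"
    using smooth_on_differentiable[OF smooth_on_pd[OF f] assms(2)] unfolding differentiable_def by metis
  define \<delta> where "\<delta> = \<bar>Da (axis b 1) - Db (axis a 1)\<bar>"
  have "\<delta> > 0"
    using ne pd_has_derivative[OF Da] pd_has_derivative[OF Db] by (simp add: \<delta>_def)
  then obtain d1 d2 where "d1 > 0" "d2 > 0"
    and d1: "\<And>h. 0 < h \<and> h < d1 \<Longrightarrow>
      \<bar>second_difference f x (h *\<^sub>R axis b 1) (h *\<^sub>R axis a 1) - h\<^sup>2 * Da (axis b 1)\<bar> \<le> 3 * (\<delta>/12) * h\<^sup>2"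
    and d2: "\<And>h. 0 < h \<and> h < d2 \<Longrightarrow>
      \<bar>second_difference f x (h *\<^sub>R axis a 1) (h *\<^sub>R axis b 1) - h\<^sup>2 * Db (axis a 1)\<bar> \<le> 3 * (\<delta>/12) * h\<^sup>2"
    using second_difference_approx[OF assms(1,2) fd Da, of "\<delta>/12" b]
      second_difference_approx[OF assms(1,2) fd Db, of "\<delta>/12" a] by auto
  define h where "h = min d1 d2 / 2"
  have h: "0 < h" "h < d1" "h < d2"
    using \<open>d1 > 0\<close> \<open>d2 > 0\<close> by (auto simp: h_def)
  define X where "X = second_difference f x (h *\<^sub>R axis b 1) (h *\<^sub>R axis a 1)"
  have "\<bar>X - h\<^sup>2 * Da (axis b 1)\<bar> \<le> \<delta>/4 * h\<^sup>2" "\<bar>X - h\<^sup>2 * Db (axis a 1)\<bar> \<le> \<delta>/4 * h\<^sup>2"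
    using d1[of h] d2[of h] h second_difference_commute[of f x "h *\<^sub>R axis a 1"] by (simp_all add: X_def)
  then have "\<bar>h\<^sup>2 * Da (axis b 1) - h\<^sup>2 * Db (axis a 1)\<bar> \<le> \<delta>/2 * h\<^sup>2"
    using abs_triangle_ineq4[of "X - h\<^sup>2 * Db (axis a 1)" "X - h\<^sup>2 * Da (axis b 1)"] by simp
  moreover have "\<bar>h\<^sup>2 * Da (axis b 1) - h\<^sup>2 * Db (axis a 1)\<bar> = h\<^sup>2 * \<delta>"
    unfolding \<delta>_def by (simp add: right_diff_distrib[symmetric] abs_mult)
  ultimately show False
    using \<open>\<delta> > 0\<close> h(1) by (simp add: field_simps)
qed

lemma sum_mult_delta_right: "(\<Sum>k\<in>UNIV. f k * (if k = j then 1 else 0)) = (f (j::'a::finite) :: real)"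
proof -
  have "(\<Sum>k\<in>UNIV. f k * (if k = j then 1 else 0)) = (\<Sum>k\<in>UNIV. if k = j then f k else 0)"
    by (rule sum.cong) auto
  then show ?thesis
    by simp
qed

lemma sum_extract_term:
  assumes "finite A" "j \<in> A"
  shows "sum F A = F j + (\<Sum>i\<in>A. if i = j then 0 else F i)"
proof -
  have "sum F A = (\<Sum>i\<in>A. (if i = j then F i else 0) + (if i = j then 0 else F i))"
    by (rule sum.cong) auto
  then show ?thesis
    using assms by (simp add: sum.distrib)
qed

text \<open>The off-diagonal terms i \<noteq> j are symmetric in p and q, so only the diagonal survives
  the antisymmetrization.\<close>

lemma double_contraction_antisym:
  fixes \<Gamma> :: "'i \<Rightarrow> 'n::finite \<Rightarrow> 'n \<Rightarrow> real" and T :: "'n list \<Rightarrow> real" and js :: "'n list"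
  defines "C p q \<equiv> (\<Sum>j<length js. \<Sum>k\<in>UNIV. \<Gamma> p (js!j) k *
      (\<Sum>i<length js. \<Sum>l\<in>UNIV. \<Gamma> q ((js[j:=k])!i) l * T ((js[j:=k])[i:=l])))"
  shows "C p q - C q p = (\<Sum>j<length js. \<Sum>l\<in>UNIV.
      (\<Sum>k\<in>UNIV. \<Gamma> p (js!j) k * \<Gamma> q k l - \<Gamma> q (js!j) k * \<Gamma> p k l) * T (js[j:=l]))"
proof -
  define n where "n = length js"
  define E where "E p q = (\<Sum>j<n. \<Sum>l\<in>UNIV. (\<Sum>k\<in>UNIV. \<Gamma> p (js!j) k * \<Gamma> q k l) * T (js[j:=l]))" for p q
  define H where "H p q j i k l = (if i = j then 0 else
      \<Gamma> p (js!j) k * (\<Gamma> q (js!i) l * T ((js[j:=k])[i:=l])))" for p q j i k l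
  have split: "C p q = E p q + (\<Sum>j<n. \<Sum>i<n. \<Sum>k\<in>UNIV. \<Sum>l\<in>UNIV. H p q j i k l)" for p q
  proof -
    have inner: "(\<Sum>i<n. \<Sum>l\<in>UNIV. \<Gamma> q ((js[j:=k])!i) l * T ((js[j:=k])[i:=l]))
        = (\<Sum>l\<in>UNIV. \<Gamma> q k l * T (js[j:=l]))
        + (\<Sum>i<n. \<Sum>l\<in>UNIV. if i = j then 0 else \<Gamma> q (js!i) l * T ((js[j:=k])[i:=l]))"
      if "j < n" for j k
      by (subst sum_extract_term[where j = j]) (use that in \<open>auto simp: n_def intro!: sum.cong\<close>)
    have "C p q = (\<Sum>j<n. \<Sum>k\<in>UNIV. \<Gamma> p (js!j) k * (\<Sum>l\<in>UNIV. \<Gamma> q k l * T (js[j:=l]))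
        + (\<Sum>i<n. \<Sum>l\<in>UNIV. H p q j i k l))"
      unfolding C_def n_def[symmetric] H_def
      by (intro sum.cong refl) (auto simp: inner distrib_left sum_distrib_left intro!: sum.cong)
    also have "\<dots> = (\<Sum>j<n. \<Sum>k\<in>UNIV. \<Gamma> p (js!j) k * (\<Sum>l\<in>UNIV. \<Gamma> q k l * T (js[j:=l])))
        + (\<Sum>j<n. \<Sum>k\<in>UNIV. \<Sum>i<n. \<Sum>l\<in>UNIV. H p q j i k l)"
      by (simp add: sum.distrib)
    also have "(\<Sum>j<n. \<Sum>k\<in>UNIV. \<Gamma> p (js!j) k * (\<Sum>l\<in>UNIV. \<Gamma> q k l * T (js[j:=l]))) = E p q"
      unfolding E_def
      by (rule sum.cong[OF refl]) (simp add: sum_distrib_left sum_distrib_right mult.assoc, rule sum.swap)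
    also have "(\<Sum>j<n. \<Sum>k\<in>UNIV. \<Sum>i<n. \<Sum>l\<in>UNIV. H p q j i k l)
        = (\<Sum>j<n. \<Sum>i<n. \<Sum>k\<in>UNIV. \<Sum>l\<in>UNIV. H p q j i k l)"
      by (rule sum.cong[OF refl]) (rule sum.swap)
    finally show ?thesis .
  qed
  have H_swap: "H p q j i k l = H q p i j l k" for p q j i k l
    using list_update_swap[of i j js l k] by (auto simp: H_def mult_ac)
  have "(\<Sum>j<n. \<Sum>i<n. \<Sum>k\<in>UNIV. \<Sum>l\<in>UNIV. H p q j i k l)
      = (\<Sum>j<n. \<Sum>i<n. \<Sum>k\<in>UNIV. \<Sum>l\<in>UNIV. H q p i j l k)" for p q
    by (simp add: H_swap)
  also have "\<dots> p q = (\<Sum>i<n. \<Sum>j<n. \<Sum>l\<in>UNIV. \<Sum>k\<in>UNIV. H q p i j l k)" for p q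
    by (subst sum.swap[where A = "{..<n}" and B = "{..<n}"])
      (rule sum.cong[OF refl], rule sum.cong[OF refl], rule sum.swap)
  finally have "(\<Sum>j<n. \<Sum>i<n. \<Sum>k\<in>UNIV. \<Sum>l\<in>UNIV. H p q j i k l)
      = (\<Sum>j<n. \<Sum>i<n. \<Sum>k\<in>UNIV. \<Sum>l\<in>UNIV. H q p j i k l)" for p q .
  then show ?thesis
    unfolding split E_def n_def by (simp add: sum_subtractf left_diff_distrib)
qed

section \<open>Riemannian charts and the Ricci identity\<close>

definition metric_matrix :: "(real^'n::finite \<Rightarrow> 'n \<Rightarrow> 'n \<Rightarrow> real) \<Rightarrow> real^'n \<Rightarrow> real^'n^'n" where
  "metric_matrix g y = (\<chi> k l. g y k l)"

lemma ginv_metric_matrix: "ginv g y i j = matrix_inv (metric_matrix g y) $ i $ j"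
  by (simp add: ginv_def metric_matrix_def)

definition metric_tensor :: "(real^'n::finite \<Rightarrow> 'n \<Rightarrow> 'n \<Rightarrow> real) \<Rightarrow> real^'n \<Rightarrow> 'n list \<Rightarrow> real" where
  "metric_tensor g y js = g y (js!0) (js!1)"

locale riemannian_chart =
  fixes U :: "(real^'n::finite) set" and g :: "real^'n \<Rightarrow> 'n \<Rightarrow> 'n \<Rightarrow> real"
  assumes riemannian_metric: "riemannian_metric_on U g"
begin

lemma open_U: "open U"
  using riemannian_metric unfolding riemannian_metric_on_def by blast

lemma smooth_on_metric: "smooth_on U (\<lambda>y. g y i j)"
  using riemannian_metric unfolding riemannian_metric_on_def by blast

lemma metric_sym: "y \<in> U \<Longrightarrow> g y i j = g y j i"
  using riemannian_metric unfolding riemannian_metric_on_def by blast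

lemma metric_pos: "y \<in> U \<Longrightarrow> v \<noteq> 0 \<Longrightarrow> (\<Sum>i\<in>UNIV. \<Sum>j\<in>UNIV. g y i j * v$i * v$j) > 0"
  using riemannian_metric unfolding riemannian_metric_on_def by blast

lemma det_metric_matrix_nonzero:
  assumes "y \<in> U"
  shows "det (metric_matrix g y) \<noteq> 0"
proof -
  have lin: "linear ((*v) (metric_matrix g y))"
    by (rule matrix_vector_mul_linear)
  have "v = 0" if "metric_matrix g y *v v = 0" for v :: "real^'n"
  proof (rule ccontr)
    have "(\<Sum>i\<in>UNIV. \<Sum>j\<in>UNIV. g y i j * v$i * v$j) = (\<Sum>i\<in>UNIV. v$i * (metric_matrix g y *v v)$i)"
      by (simp add: matrix_vector_mult_def metric_matrix_def sum_distrib_left mult_ac)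
    also have "\<dots> = 0"
      using that by simp
    finally show "v \<noteq> 0 \<Longrightarrow> False"
      using metric_pos[OF assms] by fastforce
  qed
  then have "inj ((*v) (metric_matrix g y))"
    unfolding linear_injective_0[OF lin] by blast
  then show ?thesis
    using det_nz_iff_inj[OF lin] by simp
qed

lemma metric_matrix_inverse:
  assumes "y \<in> U"
  shows "metric_matrix g y ** matrix_inv (metric_matrix g y) = mat 1"
    and "matrix_inv (metric_matrix g y) ** metric_matrix g y = mat 1"
proof -
  obtain B where "metric_matrix g y ** B = mat 1 \<and> B ** metric_matrix g y = mat 1"
    using det_metric_matrix_nonzero[OF assms] invertible_det_nz invertible_def by blast
  then have "metric_matrix g y ** matrix_inv (metric_matrix g y) = mat 1 \<and>
      matrix_inv (metric_matrix g y) ** metric_matrix g y = mat 1"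
    unfolding matrix_inv_def by (rule someI)
  then show "metric_matrix g y ** matrix_inv (metric_matrix g y) = mat 1"
    and "matrix_inv (metric_matrix g y) ** metric_matrix g y = mat 1"
    by auto
qed

lemma ginv_sym:
  assumes "y \<in> U"
  shows "ginv g y i j = ginv g y j i"
proof -
  define G B where "G = metric_matrix g y" and "B = matrix_inv (metric_matrix g y)"
  have "transpose G = G"
    using metric_sym[OF assms] by (simp add: G_def transpose_def metric_matrix_def vec_eq_iff)
  then have "transpose B ** G = mat 1"
    using metric_matrix_inverse(1)[OF assms] by (metis B_def G_def matrix_transpose_mul transpose_mat)
  then have "transpose B = B"
    using metric_matrix_inverse(1)[OF assms]
    by (metis B_def G_def matrix_mul_assoc matrix_mul_lid matrix_mul_rid)
  then have "transpose B $ j $ i = B $ j $ i"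
    by simp
  then show ?thesis
    by (simp add: B_def ginv_metric_matrix transpose_def)
qed

lemma metric_ginv:
  assumes "y \<in> U"
  shows "(\<Sum>k\<in>UNIV. g y i k * ginv g y k j) = (if i = j then 1 else 0)"
proof -
  have "(\<Sum>k\<in>UNIV. g y i k * ginv g y k j) = (metric_matrix g y ** matrix_inv (metric_matrix g y)) $ i $ j"
    by (simp add: matrix_matrix_mult_def ginv_metric_matrix metric_matrix_def)
  then show ?thesis
    using metric_matrix_inverse(1)[OF assms] by (simp add: mat_def)
qed

lemma ginv_metric:
  assumes "y \<in> U"
  shows "(\<Sum>k\<in>UNIV. ginv g y i k * g y k j) = (if i = j then 1 else 0)"
proof -
  have "(\<Sum>k\<in>UNIV. ginv g y i k * g y k j) = (matrix_inv (metric_matrix g y) ** metric_matrix g y) $ i $ j"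
    by (simp add: matrix_matrix_mult_def ginv_metric_matrix metric_matrix_def)
  then show ?thesis
    using metric_matrix_inverse(2)[OF assms] by (simp add: mat_def)
qed

lemma smooth_on_det:
  assumes "\<And>i j. smooth_on U (\<lambda>y. M y $ i $ j)"
  shows "smooth_on U (\<lambda>y. det (M y :: real^'n^'n))"
  unfolding det_def
  by (intro smooth_on_sum smooth_on_mult smooth_on_prod open_U finite_permutations smooth_on_const assms)
    auto

lemma ginv_cramer:
  assumes "y \<in> U"
  shows "ginv g y i j =
    det (\<chi> r c. if c = i then (if r = j then 1 else 0) else g y r c) * inverse (det (metric_matrix g y))"
proof -
  define B where "B = matrix_inv (metric_matrix g y)"
  have "metric_matrix g y *v (B *v axis j 1) = axis j 1"
    using metric_matrix_inverse[OF assms] by (simp add: matrix_vector_mul_assoc B_def)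
  then have "(B *v axis j 1) $ i =
      det (\<chi> r c. if c = i then (axis j 1 :: real^'n) $ r else metric_matrix g y $ r $ c) / det (metric_matrix g y)"
    using cramer[OF det_metric_matrix_nonzero[OF assms]] by auto
  moreover have "(B *v axis j 1) $ i = B $ i $ j"
    by (simp add: matrix_vector_mult_def axis_def sum_mult_delta_right)
  moreover have "(\<chi> r c. if c = i then (axis j 1 :: real^'n) $ r else metric_matrix g y $ r $ c) =
      (\<chi> r c. if c = i then (if r = j then 1 else 0) else g y r c)"
    by (simp add: axis_def metric_matrix_def vec_eq_iff)
  ultimately show ?thesis
    by (simp add: ginv_metric_matrix B_def divide_inverse)
qed

lemma smooth_on_ginv: "smooth_on U (\<lambda>y. ginv g y i j)"
proof (rule smooth_on_cong[OF open_U])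
  show "smooth_on U (\<lambda>y. det (\<chi> r c. if c = i then (if r = j then 1 else 0) else g y r c)
      * inverse (det (metric_matrix g y)))"
    by (intro smooth_on_mult smooth_on_inverse smooth_on_det open_U det_metric_matrix_nonzero)
      (auto intro!: smooth_on_if simp: smooth_on_const smooth_on_metric metric_matrix_def)
qed (simp add: ginv_cramer)

lemma smooth_on_Gamma: "smooth_on U (\<lambda>y. Gamma g y a b c)"
  unfolding Gamma_def
  by (intro smooth_on_mult smooth_on_const smooth_on_sum smooth_on_add smooth_on_diff smooth_on_pd
      smooth_on_ginv smooth_on_metric open_U) auto

lemma smooth_on_Rup: "smooth_on U (\<lambda>y. Rup g y a b c d)"
  unfolding Rup_def
  by (intro smooth_on_mult smooth_on_sum smooth_on_add smooth_on_diff smooth_on_pd smooth_on_Gamma open_U)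
    auto

lemma smooth_on_Rlow: "smooth_on U (\<lambda>y. Rlow g y a b c d)"
  unfolding Rlow_def
  by (intro smooth_on_mult smooth_on_sum smooth_on_Rup smooth_on_metric open_U) auto

lemma pd_metric_sym: "y \<in> U \<Longrightarrow> pd d (\<lambda>y. g y a b) y = pd d (\<lambda>y. g y b a) y"
  by (rule pd_cong_open[OF open_U]) (auto intro: metric_sym)

lemma Gamma_sym: "y \<in> U \<Longrightarrow> Gamma g y a b c = Gamma g y b a c"
  unfolding Gamma_def by (simp add: pd_metric_sym[of y _ a b] add_ac)

lemma Gamma_lowered:
  assumes y: "y \<in> U"
  shows "(\<Sum>k\<in>UNIV. Gamma g y a c k * g y k d) =
    1/2 * (pd a (\<lambda>y. g y c d) y + pd c (\<lambda>y. g y a d) y - pd d (\<lambda>y. g y a c) y)"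
proof -
  define P where "P m = pd a (\<lambda>y. g y c m) y + pd c (\<lambda>y. g y a m) y - pd m (\<lambda>y. g y a c) y" for m
  have "(\<Sum>k\<in>UNIV. Gamma g y a c k * g y k d) = 1/2 * (\<Sum>k\<in>UNIV. \<Sum>m\<in>UNIV. P m * (ginv g y m k * g y k d))"
    unfolding Gamma_def P_def[symmetric]
    by (simp add: sum_distrib_left sum_distrib_right ginv_sym[OF y] mult_ac)
  also have "\<dots> = 1/2 * (\<Sum>m\<in>UNIV. P m * (\<Sum>k\<in>UNIV. ginv g y m k * g y k d))"
    by (subst sum.swap) (simp add: sum_distrib_left)
  also have "\<dots> = 1/2 * P d"
    by (simp add: ginv_metric[OF y] sum_mult_delta_right)
  finally show ?thesis
    by (simp add: P_def)
qed

lemma pd_metric: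
  assumes y: "y \<in> U"
  shows "pd a (\<lambda>y. g y c d) y = (\<Sum>k\<in>UNIV. Gamma g y a c k * g y k d) + (\<Sum>k\<in>UNIV. Gamma g y a d k * g y c k)"
proof -
  have "(\<Sum>k\<in>UNIV. Gamma g y a d k * g y c k) = (\<Sum>k\<in>UNIV. Gamma g y a d k * g y k c)"
    by (simp add: metric_sym[OF y, of c])
  then show ?thesis
    unfolding Gamma_lowered[OF y] using pd_metric_sym[OF y, of a d c] by (simp add: field_simps)
qed

lemma nabla_Cons:
  "nabla g T y (a # is) = pd a (\<lambda>y. T y is) y
     - (\<Sum>j<length is. \<Sum>k\<in>UNIV. Gamma g y a (is ! j) k * T y (is[j := k]))"
  by (simp add: nabla_def)

lemma pd_nabla_Cons:
  assumes x: "x \<in> U" and T: "\<And>js. smooth_on U (\<lambda>y. T y js)"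
  shows "pd p (\<lambda>y. nabla g T y (q # js)) x = pd p (pd q (\<lambda>y. T y js)) x
    - (\<Sum>j<length js. \<Sum>k\<in>UNIV. pd p (\<lambda>y. Gamma g y q (js!j) k) x * T x (js[j:=k]))
    - (\<Sum>j<length js. \<Sum>k\<in>UNIV. Gamma g x q (js!j) k * pd p (\<lambda>y. T y (js[j:=k])) x)"
proof -
  have sm: "smooth_on U (\<lambda>y. Gamma g y q (js!j) k * T y (js[j:=k]))" for j k
    by (intro smooth_on_mult smooth_on_Gamma T open_U)
  have "pd p (\<lambda>y. nabla g T y (q # js)) x = pd p (pd q (\<lambda>y. T y js)) x
      - (\<Sum>j<length js. \<Sum>k\<in>UNIV. pd p (\<lambda>y. Gamma g y q (js!j) k * T y (js[j:=k])) x)"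
  proof -
    have "pd p (\<lambda>y. nabla g T y (q # js)) x = pd p (pd q (\<lambda>y. T y js)) x
        - pd p (\<lambda>y. \<Sum>j<length js. \<Sum>k\<in>UNIV. Gamma g y q (js!j) k * T y (js[j:=k])) x"
      unfolding nabla_Cons
      by (rule pd_diff) (auto intro!: smooth_on_differentiable[OF _ x] smooth_on_pd smooth_on_sum sm T open_U)
    also have "pd p (\<lambda>y. \<Sum>j<length js. \<Sum>k\<in>UNIV. Gamma g y q (js!j) k * T y (js[j:=k])) x
        = (\<Sum>j<length js. \<Sum>k\<in>UNIV. pd p (\<lambda>y. Gamma g y q (js!j) k * T y (js[j:=k])) x)"
      by (subst pd_sum) (auto intro!: sum.cong pd_sum smooth_on_differentiable[OF _ x] smooth_on_sum sm open_U)
    finally show ?thesis .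
  qed
  also have "\<dots> = pd p (pd q (\<lambda>y. T y js)) x
      - (\<Sum>j<length js. \<Sum>k\<in>UNIV. pd p (\<lambda>y. Gamma g y q (js!j) k) x * T x (js[j:=k])
         + Gamma g x q (js!j) k * pd p (\<lambda>y. T y (js[j:=k])) x)"
    by (simp add: pd_mult smooth_on_differentiable[OF _ x] smooth_on_Gamma T)
  finally show ?thesis
    by (simp add: sum.distrib)
qed

lemma nabla_nabla_Cons:
  assumes x: "x \<in> U" and T: "\<And>js. smooth_on U (\<lambda>y. T y js)"
  shows "nabla g (nabla g T) x (p # q # js) =
     pd p (pd q (\<lambda>y. T y js)) x
   - (\<Sum>j<length js. \<Sum>k\<in>UNIV. pd p (\<lambda>y. Gamma g y q (js!j) k) x * T x (js[j:=k]))
   - (\<Sum>j<length js. \<Sum>k\<in>UNIV. Gamma g x q (js!j) k * pd p (\<lambda>y. T y (js[j:=k])) x)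
   - (\<Sum>k\<in>UNIV. Gamma g x p q k * nabla g T x (k # js))
   - (\<Sum>j<length js. \<Sum>k\<in>UNIV. Gamma g x p (js!j) k * pd q (\<lambda>y. T y (js[j:=k])) x)
   + (\<Sum>j<length js. \<Sum>k\<in>UNIV. Gamma g x p (js!j) k *
        (\<Sum>i<length js. \<Sum>l\<in>UNIV. Gamma g x q ((js[j:=k])!i) l * T x ((js[j:=k])[i:=l])))"
proof -
  have "nabla g (nabla g T) x (p # q # js) = pd p (\<lambda>y. nabla g T y (q # js)) x
      - (\<Sum>k\<in>UNIV. Gamma g x p q k * nabla g T x (k # js))
      - (\<Sum>j<length js. \<Sum>k\<in>UNIV. Gamma g x p (js!j) k * nabla g T x (q # js[j:=k]))"
    unfolding nabla_Cons[where T = "nabla g T"] length_Cons sum.lessThan_Suc_shift by simp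
  also have "(\<Sum>j<length js. \<Sum>k\<in>UNIV. Gamma g x p (js!j) k * nabla g T x (q # js[j:=k]))
     = (\<Sum>j<length js. \<Sum>k\<in>UNIV. Gamma g x p (js!j) k * pd q (\<lambda>y. T y (js[j:=k])) x)
     - (\<Sum>j<length js. \<Sum>k\<in>UNIV. Gamma g x p (js!j) k *
        (\<Sum>i<length js. \<Sum>l\<in>UNIV. Gamma g x q ((js[j:=k])!i) l * T x ((js[j:=k])[i:=l])))"
    by (simp add: nabla_Cons right_diff_distrib sum_subtractf)
  finally show ?thesis
    unfolding pd_nabla_Cons[OF x T] by simp
qed

lemma ricci_identity:
  assumes x: "x \<in> U" and T: "\<And>js. smooth_on U (\<lambda>y. T y js)"
  shows "nabla g (nabla g T) x (a # b # js) - nabla g (nabla g T) x (b # a # js) =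
    - (\<Sum>j<length js. \<Sum>l\<in>UNIV. Rup g x a b (js!j) l * T x (js[j:=l]))"
proof -
  define A where "A p q = (\<Sum>j<length js. \<Sum>k\<in>UNIV. pd p (\<lambda>y. Gamma g y q (js!j) k) x * T x (js[j:=k]))"
    for p q
  define C where "C p q = (\<Sum>j<length js. \<Sum>k\<in>UNIV. Gamma g x p (js!j) k *
      (\<Sum>i<length js. \<Sum>l\<in>UNIV. Gamma g x q ((js[j:=k])!i) l * T x ((js[j:=k])[i:=l])))" for p q
  have "C a b - C b a = (\<Sum>j<length js. \<Sum>l\<in>UNIV. (\<Sum>k\<in>UNIV.
      Gamma g x a (js!j) k * Gamma g x b k l - Gamma g x b (js!j) k * Gamma g x a k l) * T x (js[j:=l]))"
    unfolding C_def by (rule double_contraction_antisym)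
  moreover have "(\<Sum>j<length js. \<Sum>l\<in>UNIV. Rup g x a b (js!j) l * T x (js[j:=l])) =
      (\<Sum>j<length js. \<Sum>l\<in>UNIV. pd a (\<lambda>y. Gamma g y b (js!j) l) x * T x (js[j:=l])
         - pd b (\<lambda>y. Gamma g y a (js!j) l) x * T x (js[j:=l])
         - (\<Sum>k\<in>UNIV. Gamma g x a (js!j) k * Gamma g x b k l - Gamma g x b (js!j) k * Gamma g x a k l)
           * T x (js[j:=l]))"
    unfolding Rup_def
    by (intro sum.cong refl) (simp add: algebra_simps sum_subtractf)
  ultimately have "C a b - C b a = A a b - A b a - (\<Sum>j<length js. \<Sum>l\<in>UNIV. Rup g x a b (js!j) l * T x (js[j:=l]))"
    unfolding A_def by (simp add: sum_subtractf)
  moreover have "pd a (pd b (\<lambda>y. T y js)) x = pd b (pd a (\<lambda>y. T y js)) x"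
    by (rule pd_commute[OF open_U x T])
  moreover have "Gamma g x a b k = Gamma g x b a k" for k
    by (rule Gamma_sym[OF x])
  ultimately show ?thesis
    unfolding nabla_nabla_Cons[OF x T] A_def[symmetric] C_def[symmetric] by simp
qed

lemma Rup_antisym: "Rup g x a b c d = - Rup g x b a c d"
  unfolding Rup_def by (simp add: mult.commute)

lemma Rup_bianchi:
  assumes x: "x \<in> U"
  shows "Rup g x a b c d + Rup g x b c a d + Rup g x c a b d = 0"
proof -
  have "pd p (\<lambda>y. Gamma g y q r d) x = pd p (\<lambda>y. Gamma g y r q d) x" for p q r
    by (rule pd_cong_open[OF open_U x]) (auto intro: Gamma_sym)
  then show ?thesis
    unfolding Rup_def using Gamma_sym[OF x] by (simp add: mult.commute)
qed

lemma Rlow_antisym_12: "Rlow g x a b c d = - Rlow g x b a c d"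
  unfolding Rlow_def by (subst Rup_antisym) (simp add: sum_negf)

lemma Rlow_bianchi:
  assumes x: "x \<in> U"
  shows "Rlow g x a b c d + Rlow g x b c a d + Rlow g x c a b d = 0"
proof -
  have "Rlow g x a b c d + Rlow g x b c a d + Rlow g x c a b d =
      (\<Sum>e\<in>UNIV. (Rup g x a b c e + Rup g x b c a e + Rup g x c a b e) * g x e d)"
    unfolding Rlow_def by (simp add: sum.distrib distrib_right)
  then show ?thesis
    by (simp add: Rup_bianchi[OF x])
qed

lemma Rup_Rlow_ginv:
  assumes x: "x \<in> U"
  shows "Rup g x a b c d = (\<Sum>e\<in>UNIV. Rlow g x a b c e * ginv g x e d)"
proof -
  have "(\<Sum>e\<in>UNIV. Rlow g x a b c e * ginv g x e d)
      = (\<Sum>f\<in>UNIV. Rup g x a b c f * (\<Sum>e\<in>UNIV. g x f e * ginv g x e d))"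
    unfolding Rlow_def sum_distrib_right sum_distrib_left
    by (subst sum.swap) (simp add: mult.assoc)
  then show ?thesis
    by (simp add: metric_ginv[OF x] sum_mult_delta_right)
qed

lemma nabla_metric_tensor:
  assumes "y \<in> U"
  shows "nabla g (metric_tensor g) y [p, c, d] = 0"
  by (simp add: nabla_Cons metric_tensor_def pd_metric[OF assms] metric_sym[OF assms, of c])

text \<open>The Ricci identity applied to the parallel metric tensor.\<close>

lemma Rlow_antisym_34:
  assumes x: "x \<in> U"
  shows "Rlow g x a b c d = - Rlow g x a b d c"
proof -
  have "nabla g (metric_tensor g) y [p, q, r] = 0" if "y \<in> U" for y p q r
    using nabla_metric_tensor[OF that] .
  then have "nabla g (nabla g (metric_tensor g)) x [p, q, c, d] = 0" for p q
    using pd_cong_open[OF open_U x, of "\<lambda>y. nabla g (metric_tensor g) y [q, c, d]" "\<lambda>y. 0"]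
    by (simp add: nabla_Cons[where T = "nabla g (metric_tensor g)"] pd_const x)
  moreover have "smooth_on U (\<lambda>y. metric_tensor g y js)" for js
    unfolding metric_tensor_def by (rule smooth_on_metric)
  ultimately have "(\<Sum>j<length [c, d]. \<Sum>l\<in>UNIV. Rup g x a b ([c, d]!j) l * metric_tensor g x ([c, d][j:=l])) = 0"
    using ricci_identity[OF x, of "metric_tensor g" a b "[c, d]"] by simp
  then show ?thesis
    by (simp add: Rlow_def metric_tensor_def metric_sym[OF x, of c])
qed

lemma nabla_commutator_Rtensor:
  assumes x: "x \<in> U"
  shows "nabla g (nabla g (Rtensor g)) x [a, b, c, d, e, f] - nabla g (nabla g (Rtensor g)) x [b, a, c, d, e, f] =
    - ((\<Sum>l\<in>UNIV. Rup g x a b c l * Rlow g x l d e f) + (\<Sum>l\<in>UNIV. Rup g x a b d l * Rlow g x c l e f)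
      + (\<Sum>l\<in>UNIV. Rup g x a b e l * Rlow g x c d l f) + (\<Sum>l\<in>UNIV. Rup g x a b f l * Rlow g x c d e l))"
proof -
  have "smooth_on U (\<lambda>y. Rtensor g y js)" for js
    unfolding Rtensor_def by (rule smooth_on_Rlow)
  from ricci_identity[where T = "Rtensor g", OF x this, of a b "[c, d, e, f]"] show ?thesis
    by (simp add: Rtensor_def add.assoc)
qed

end

section \<open>Algebraic curvature tensors\<close>

text \<open>\<open>G\<close>, \<open>Ginv\<close>, \<open>R\<close>, \<open>Ru\<close> and \<open>Rc\<close> stand for g_{ab}, g^{ab}, R_{abcd}, R_{abc}{}^d and
  R_{ac} at a single point.\<close>

locale algebraic_curvature_tensor =
  fixes G Ginv :: "'n::finite \<Rightarrow> 'n \<Rightarrow> real"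
    and R Ru :: "'n \<Rightarrow> 'n \<Rightarrow> 'n \<Rightarrow> 'n \<Rightarrow> real"
    and Rc :: "'n \<Rightarrow> 'n \<Rightarrow> real"
  assumes G_sym: "G i j = G j i"
    and Ginv_sym: "Ginv i j = Ginv j i"
    and Ginv_G: "(\<Sum>k\<in>UNIV. Ginv i k * G k j) = (if i = j then 1 else 0)"
    and Ru_eq: "Ru a b c d = (\<Sum>e\<in>UNIV. R a b c e * Ginv e d)"
    and R_antisym_12: "R a b c d = - R b a c d"
    and R_antisym_34: "R a b c d = - R a b d c"
    and R_bianchi: "R a b c d + R b c a d + R c a b d = 0"
    and Rc_eq: "Rc a c = (\<Sum>b\<in>UNIV. Ru a b c b)"
begin

lemma R_pair_sym: "R a b c d = R c d a b"
  using R_antisym_34[of a b c d] R_bianchi[of a b c d] R_bianchi[of a b d c] R_antisym_12[of a c b d]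
    R_antisym_34[of a c b d] R_bianchi[of a c d b] R_antisym_12[of a d b c] R_antisym_34[of a d b c]
    R_antisym_12[of a d c b] R_antisym_34[of b c a d] R_bianchi[of b c d a] R_antisym_34[of b d a c]
    R_antisym_12[of b d c a] R_antisym_34[of c d a b]
  by linarith

lemma Ru_antisym: "Ru a b c d = - Ru b a c d"
  unfolding Ru_eq by (subst R_antisym_12) (simp add: sum_negf)

lemma Ru_bianchi: "Ru a b c d + Ru b c a d + Ru c a b d = 0"
proof -
  have "Ru a b c d + Ru b c a d + Ru c a b d = (\<Sum>e\<in>UNIV. (R a b c e + R b c a e + R c a b e) * Ginv e d)"
    unfolding Ru_eq by (simp add: sum.distrib distrib_right)
  then show ?thesis
    by (simp add: R_bianchi)
qed

definition contract :: "('n \<Rightarrow> 'n \<Rightarrow> real) \<Rightarrow> real" where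
  "contract F = (\<Sum>c\<in>UNIV. \<Sum>f\<in>UNIV. Ginv c f * F c f)"

lemma contract_add: "contract (\<lambda>c f. F c f + H c f) = contract F + contract H"
  unfolding contract_def by (simp add: distrib_left sum.distrib)

lemma contract_diff: "contract (\<lambda>c f. F c f - H c f) = contract F - contract H"
  unfolding contract_def by (simp add: right_diff_distrib sum_subtractf)

lemma contract_minus: "contract (\<lambda>c f. - F c f) = - contract F"
  unfolding contract_def by (simp add: sum_negf)

lemma contract_scale: "contract (\<lambda>c f. s * F c f) = s * contract F"
  unfolding contract_def by (simp add: sum_distrib_left mult_ac)

lemma contract_G_left: "contract (\<lambda>c f. G c b * Z f) = Z b"
proof -
  have "contract (\<lambda>c f. G c b * Z f) = (\<Sum>c\<in>UNIV. \<Sum>f\<in>UNIV. Z f * (Ginv f c * G c b))"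
    unfolding contract_def by (simp add: Ginv_sym[of _ "_ :: 'n"] mult_ac)
  also have "\<dots> = (\<Sum>f\<in>UNIV. Z f * (\<Sum>c\<in>UNIV. Ginv f c * G c b))"
    by (subst sum.swap) (simp add: sum_distrib_left)
  finally show ?thesis
    by (simp only: Ginv_G sum_mult_delta_right)
qed

lemma contract_G_right: "contract (\<lambda>c f. G f b * Z c) = Z b"
proof -
  have "contract (\<lambda>c f. G f b * Z c) = (\<Sum>c\<in>UNIV. Z c * (\<Sum>f\<in>UNIV. Ginv c f * G f b))"
    unfolding contract_def by (simp add: sum_distrib_left mult_ac)
  then show ?thesis
    by (simp only: Ginv_G sum_mult_delta_right)
qed

lemma Rc_sym: "Rc a c = Rc c a"
proof -
  have "Rc a c = (\<Sum>b\<in>UNIV. \<Sum>e\<in>UNIV. R c e a b * Ginv b e)"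
    unfolding Rc_eq Ru_eq
  proof (intro sum.cong refl)
    show "R a b c e * Ginv e b = R c e a b * Ginv b e" for b e
      using R_pair_sym[of a b c e] Ginv_sym[of e b] by simp
  qed
  also have "\<dots> = Rc c a"
    unfolding Rc_eq Ru_eq by (rule sum.swap)
  finally show ?thesis .
qed

lemma contract_R_first: "contract (\<lambda>c f. R c p q f) = - Rc p q"
proof -
  have "contract (\<lambda>c f. R c p q f) = (\<Sum>c\<in>UNIV. \<Sum>f\<in>UNIV. - (R p c q f * Ginv f c))"
    unfolding contract_def using R_antisym_12[of _ p] Ginv_sym by (simp add: mult.commute)
  then show ?thesis
    unfolding Rc_eq Ru_eq by (simp add: sum_negf)
qed

lemma contract_sum: "contract (\<lambda>c f. \<Sum>l\<in>UNIV. X l * Y c f l) = (\<Sum>l\<in>UNIV. X l * contract (\<lambda>c f. Y c f l))"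
proof -
  have "contract (\<lambda>c f. \<Sum>l\<in>UNIV. X l * Y c f l) = (\<Sum>c\<in>UNIV. \<Sum>f\<in>UNIV. \<Sum>l\<in>UNIV. X l * (Ginv c f * Y c f l))"
    unfolding contract_def by (simp add: sum_distrib_left mult_ac)
  also have "\<dots> = (\<Sum>c\<in>UNIV. \<Sum>l\<in>UNIV. \<Sum>f\<in>UNIV. X l * (Ginv c f * Y c f l))"
    by (rule sum.cong[OF refl], rule sum.swap)
  also have "\<dots> = (\<Sum>l\<in>UNIV. \<Sum>c\<in>UNIV. \<Sum>f\<in>UNIV. X l * (Ginv c f * Y c f l))"
    by (rule sum.swap)
  finally show ?thesis
    unfolding contract_def by (simp add: sum_distrib_left)
qed

definition Ruu :: "'n \<Rightarrow> 'n \<Rightarrow> 'n \<Rightarrow> 'n \<Rightarrow> real" where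
  "Ruu a b c d = (\<Sum>e\<in>UNIV. Ginv c e * Ru a b e d)"

lemma Ruu_antisym: "Ruu a b c d = - Ruu a b d c"
proof -
  have Ruu_R: "Ruu a b c d = (\<Sum>e\<in>UNIV. \<Sum>h\<in>UNIV. Ginv c e * Ginv h d * R a b e h)" for c d
    unfolding Ruu_def Ru_eq by (simp add: sum_distrib_left mult_ac)
  have "Ruu a b c d = (\<Sum>h\<in>UNIV. \<Sum>e\<in>UNIV. Ginv c e * Ginv h d * R a b e h)"
    unfolding Ruu_R by (rule sum.swap)
  also have "\<dots> = (\<Sum>h\<in>UNIV. \<Sum>e\<in>UNIV. - (Ginv d h * Ginv e c * R a b h e))"
  proof (intro sum.cong refl)
    show "Ginv c e * Ginv h d * R a b e h = - (Ginv d h * Ginv e c * R a b h e)" for h e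
      using R_antisym_34[of a b e h] Ginv_sym[of c e] Ginv_sym[of h d] by simp
  qed
  finally show ?thesis
    unfolding Ruu_R[of d c] by (simp add: sum_negf)
qed

text \<open>The curvature operator R_{ab} acting on R as a derivation, with the sign that makes it
  equal to [\<nabla>_a, \<nabla>_b] R_{cdef}.\<close>

definition curvature_action :: "'n \<Rightarrow> 'n \<Rightarrow> 'n \<Rightarrow> 'n \<Rightarrow> 'n \<Rightarrow> 'n \<Rightarrow> real" where
  "curvature_action c d e f a b =
     - ((\<Sum>l\<in>UNIV. Ru a b c l * R l d e f) + (\<Sum>l\<in>UNIV. Ru a b d l * R c l e f)
      + (\<Sum>l\<in>UNIV. Ru a b e l * R c d l f) + (\<Sum>l\<in>UNIV. Ru a b f l * R c d e l))"

definition Q_R :: "'n \<Rightarrow> 'n \<Rightarrow> 'n \<Rightarrow> 'n \<Rightarrow> 'n \<Rightarrow> 'n \<Rightarrow> real" where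
  "Q_R c d e f a b =
     - G c b * R a d e f + G c a * R b d e f - G d b * R c a e f + G d a * R c b e f
     - G e b * R c d a f + G e a * R c d b f - G f b * R c d e a + G f a * R c d e b"

lemma contract_outer_terms:
  "contract (\<lambda>c f. \<Sum>l\<in>UNIV. Ru a b c l * R l d e f) + contract (\<lambda>c f. \<Sum>l\<in>UNIV. Ru a b f l * R c d e l) = 0"
proof -
  have "contract (\<lambda>c f. \<Sum>l\<in>UNIV. Ru a b c l * R l d e f) = (\<Sum>c\<in>UNIV. \<Sum>f\<in>UNIV. \<Sum>l\<in>UNIV. Ginv f c * Ru a b c l * R l d e f)"
    unfolding contract_def by (simp add: sum_distrib_left Ginv_sym[of _ "_ :: 'n"] mult_ac)
  also have "\<dots> = (\<Sum>f\<in>UNIV. \<Sum>l\<in>UNIV. \<Sum>c\<in>UNIV. Ginv f c * Ru a b c l * R l d e f)"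
    by (subst sum.swap) (rule sum.cong[OF refl], rule sum.swap)
  also have "\<dots> = (\<Sum>f\<in>UNIV. \<Sum>l\<in>UNIV. Ruu a b f l * R l d e f)"
    unfolding Ruu_def by (simp add: sum_distrib_right)
  finally have T1: "contract (\<lambda>c f. \<Sum>l\<in>UNIV. Ru a b c l * R l d e f) = (\<Sum>f\<in>UNIV. \<Sum>l\<in>UNIV. Ruu a b f l * R l d e f)" .
  have "contract (\<lambda>c f. \<Sum>l\<in>UNIV. Ru a b f l * R c d e l) = (\<Sum>c\<in>UNIV. \<Sum>f\<in>UNIV. \<Sum>l\<in>UNIV. Ginv c f * Ru a b f l * R c d e l)"
    unfolding contract_def by (simp add: sum_distrib_left mult_ac)
  also have "\<dots> = (\<Sum>c\<in>UNIV. \<Sum>l\<in>UNIV. \<Sum>f\<in>UNIV. Ginv c f * Ru a b f l * R c d e l)"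
    by (rule sum.cong[OF refl], rule sum.swap)
  also have "\<dots> = (\<Sum>c\<in>UNIV. \<Sum>l\<in>UNIV. Ruu a b c l * R c d e l)"
    unfolding Ruu_def by (simp add: sum_distrib_right)
  also have "\<dots> = (\<Sum>l\<in>UNIV. \<Sum>c\<in>UNIV. - (Ruu a b l c * R c d e l))"
  proof (subst sum.swap, intro sum.cong refl)
    show "Ruu a b c l * R c d e l = - (Ruu a b l c * R c d e l)" for l c
      using Ruu_antisym[of a b l c] by simp
  qed
  finally show ?thesis
    using T1 by (simp add: sum_negf)
qed

lemma contract_curvature_action:
  "contract (\<lambda>c f. curvature_action c d e f a b) = (\<Sum>m\<in>UNIV. Ru a b d m * Rc m e) + (\<Sum>m\<in>UNIV. Ru a b e m * Rc d m)"
  using contract_outer_terms[of a b d e]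
  unfolding curvature_action_def contract_minus contract_add
  by (simp add: contract_sum contract_R_first sum_negf)

definition Q_Rc :: "'n \<Rightarrow> 'n \<Rightarrow> 'n \<Rightarrow> 'n \<Rightarrow> real" where
  "Q_Rc a b d e = G d b * Rc a e - G d a * Rc b e + G e b * Rc d a - G e a * Rc d b"

lemma contract_Q: "contract (\<lambda>c f. Q_R c d e f a b) = Q_Rc a b d e"
  unfolding Q_R_def Q_Rc_def
  by (simp add: contract_add contract_diff contract_minus contract_scale contract_G_left contract_G_right
      contract_R_first)

definition Rc_Ru :: "'n \<Rightarrow> 'n \<Rightarrow> 'n \<Rightarrow> 'n \<Rightarrow> real" where
  "Rc_Ru p x y z = (\<Sum>m\<in>UNIV. Rc p m * Ru x y z m)"

lemma Rc_Ru_antisym: "Rc_Ru p x y z = - Rc_Ru p y x z"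
  unfolding Rc_Ru_def by (subst Ru_antisym) (simp add: sum_negf)

lemma Rc_Ru_bianchi: "Rc_Ru p x y z + Rc_Ru p y z x + Rc_Ru p z x y = 0"
proof -
  have "Rc_Ru p x y z + Rc_Ru p y z x + Rc_Ru p z x y = (\<Sum>m\<in>UNIV. Rc p m * (Ru x y z m + Ru y z x m + Ru z x y m))"
    unfolding Rc_Ru_def by (simp add: sum.distrib distrib_left)
  then show ?thesis
    by (simp add: Ru_bianchi)
qed

lemma Rc_Ru_pseudosymmetric:
  assumes "\<And>c d e f. curvature_action c d e f a b = L * Q_R c d e f a b"
  shows "Rc_Ru e a b d + Rc_Ru d a b e = L * Q_Rc a b d e"
proof -
  have "contract (\<lambda>c f. curvature_action c d e f a b) = L * contract (\<lambda>c f. Q_R c d e f a b)"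
    unfolding assms by (rule contract_scale)
  then show ?thesis
    unfolding contract_curvature_action contract_Q Rc_Ru_def by (simp add: Rc_sym[of _ e] mult.commute)
qed

lemma Rc_Ru_cyclic:
  assumes "\<And>a b c d e f. curvature_action c d e f a b = L * Q_R c d e f a b"
  shows "Rc_Ru a b c e + Rc_Ru b c a e + Rc_Ru c a b e = 0"
proof -
  have "Q_Rc b c e a + Q_Rc c a e b + Q_Rc a b e c = 0"
    unfolding Q_Rc_def using Rc_sym G_sym by (simp add: algebra_simps)
  then have "L * Q_Rc b c e a + L * Q_Rc c a e b + L * Q_Rc a b e c = 0"
    by (simp add: distrib_left[symmetric])
  then show ?thesis
    using Rc_Ru_pseudosymmetric[OF assms, where a = b and b = c and d = e and e = a]
      Rc_Ru_pseudosymmetric[OF assms, where a = c and b = a and d = e and e = b]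
      Rc_Ru_pseudosymmetric[OF assms, where a = a and b = b and d = e and e = c]
      Rc_Ru_bianchi[of e b c a]
    by linarith
qed

lemma Rc_Ru_four_term:
  assumes "\<And>a b c d e f. curvature_action c d e f a b = L * Q_R c d e f a b"
  shows "Rc_Ru a b e c - Rc_Ru b a c e + Rc_Ru c e b a - Rc_Ru e c a b = 0"
proof -
  have "Q_Rc a b c e - Q_Rc a e b c + Q_Rc b c a e + Q_Rc c e a b = 0"
    unfolding Q_Rc_def using Rc_sym G_sym by (simp add: algebra_simps)
  then have "L * Q_Rc a b c e - L * Q_Rc a e b c + L * Q_Rc b c a e + L * Q_Rc c e a b = 0"
    by (simp add: right_diff_distrib[symmetric] distrib_left[symmetric])
  then show ?thesis
    using Rc_Ru_bianchi[of a b c e] Rc_Ru_antisym[of a b e c] Rc_Ru_bianchi[of b a c e]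
      Rc_Ru_antisym[of b a e c] Rc_Ru_antisym[of c a b e] Rc_Ru_bianchi[of c a e b] Rc_Ru_bianchi[of e a b c]
      Rc_Ru_pseudosymmetric[OF assms, where a = a and b = b and d = c and e = e]
      Rc_Ru_pseudosymmetric[OF assms, where a = a and b = e and d = b and e = c]
      Rc_Ru_pseudosymmetric[OF assms, where a = b and b = c and d = a and e = e]
      Rc_Ru_pseudosymmetric[OF assms, where a = c and b = e and d = a and e = b]
    by linarith
qed

end

theorem mainTheorem9:
  fixes U :: "(real^'n::finite) set" and g :: "real^'n \<Rightarrow> 'n \<Rightarrow> 'n \<Rightarrow> real"
  assumes "riemannian_metric_on U g"
    and "pseudosymmetric_on U g"
  shows "\<forall>x\<in>U. \<forall>a b c e.
      (\<Sum>m\<in>UNIV. Ric g x a m * Rup g x b c e m) + (\<Sum>m\<in>UNIV. Ric g x b m * Rup g x c a e m)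
        + (\<Sum>m\<in>UNIV. Ric g x c m * Rup g x a b e m) = 0
    \<and> (\<Sum>m\<in>UNIV. Ric g x a m * Rup g x b e c m) - (\<Sum>m\<in>UNIV. Ric g x b m * Rup g x a c e m)
        + (\<Sum>m\<in>UNIV. Ric g x c m * Rup g x e b a m) - (\<Sum>m\<in>UNIV. Ric g x e m * Rup g x c a b m) = 0"
proof (intro ballI allI)
  fix x a b c e
  assume x: "x \<in> U"
  interpret riemannian_chart U g
    by (rule riemannian_chart.intro) (fact assms(1))
  interpret A: algebraic_curvature_tensor "g x" "ginv g x" "Rlow g x" "Rup g x" "Ric g x"
    by unfold_locales
      (rule metric_sym[OF x] ginv_sym[OF x] ginv_metric[OF x] Rup_Rlow_ginv[OF x] Rlow_antisym_12
        Rlow_antisym_34[OF x] Rlow_bianchi[OF x] Ric_def)+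
  obtain L where "\<forall>x\<in>U. \<forall>a b c d e f.
      nabla g (nabla g (Rtensor g)) x [a, b, c, d, e, f] - nabla g (nabla g (Rtensor g)) x [b, a, c, d, e, f]
        = L x * QgR g x c d e f a b"
    using assms(2) unfolding pseudosymmetric_on_def by blast
  then have pseudosymmetric: "A.curvature_action c d e f a b = L x * A.Q_R c d e f a b" for a b c d e f
    using x nabla_commutator_Rtensor[OF x, of a b c d e f]
    unfolding A.curvature_action_def A.Q_R_def QgR_def by simp
  have "A.Rc_Ru a b c e + A.Rc_Ru b c a e + A.Rc_Ru c a b e = 0 \<and>
      A.Rc_Ru a b e c - A.Rc_Ru b a c e + A.Rc_Ru c e b a - A.Rc_Ru e c a b = 0"
    using A.Rc_Ru_cyclic[OF pseudosymmetric] A.Rc_Ru_four_term[OF pseudosymmetric] by blast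
  then show "(\<Sum>m\<in>UNIV. Ric g x a m * Rup g x b c e m) + (\<Sum>m\<in>UNIV. Ric g x b m * Rup g x c a e m)
        + (\<Sum>m\<in>UNIV. Ric g x c m * Rup g x a b e m) = 0
    \<and> (\<Sum>m\<in>UNIV. Ric g x a m * Rup g x b e c m) - (\<Sum>m\<in>UNIV. Ric g x b m * Rup g x a c e m)
        + (\<Sum>m\<in>UNIV. Ric g x c m * Rup g x e b a m) - (\<Sum>m\<in>UNIV. Ric g x e m * Rup g x c a b m) = 0"
    unfolding A.Rc_Ru_def .
qed

end
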